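(* Let $(G,O)$ be an equipped group such that the elements of $O$ generate $G$, and let $\widehat G$ be the associated $C$-group. If $G$ is a perfect group, then $\widehat G$ is isomorphic to the direct product $[\widehat G,\widehat G]\times(\widehat G/[\widehat G,\widehat G])$.
   Context: An equipped group is a pair $(G,O)$, $G$ a group, $O\subset G$ a union of finitely many conjugacy classes, $1\notin O$. The associated $C$-group $\widehat G$ (the $C$-group equivalent to $(G,O)$) is the group with generators $y_g$ ($g\in O$) and relations $y_h^{-1}y_gy_h=y_{h^{-1}gh}$ for all $g,h\in O$. *)

theory Defs
  imports "HOL-Algebra.Algebra"
begin

definition conj_class :: "('a, 'b) monoid_scheme \<Rightarrow> 'a \<Rightarrow> 'a set" where
  "conj_class G g = {inv\<^bsub>G\<^esub> h \<otimes>\<^bsub>G\<^esub> g \<otimes>\<^bsub>G\<^esub> h | h. h \<in> carrier G}"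

definition equipped_group :: "('a, 'b) monoid_scheme \<Rightarrow> 'a set \<Rightarrow> bool" where
  "equipped_group G Oc \<longleftrightarrow> group G \<and> Oc \<subseteq> carrier G \<and> \<one>\<^bsub>G\<^esub> \<notin> Oc \<and>
     (\<exists>S. finite S \<and> S \<subseteq> carrier G \<and> Oc = (\<Union>s\<in>S. conj_class G s))"

definition perfect_group :: "('a, 'b) monoid_scheme \<Rightarrow> bool" where
  "perfect_group G \<longleftrightarrow> derived G (carrier G) = carrier G"

text \<open>Words in the generators y_g (g in Oc): a letter (g, True) stands for y_g,
  (g, False) for y_g^{-1}.\<close>

inductive cgroup_eq :: "('a, 'b) monoid_scheme \<Rightarrow> 'a set \<Rightarrow> ('a \<times> bool) list \<Rightarrow> ('a \<times> bool) list \<Rightarrow> bool"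
  for G Oc where
  refl: "w \<in> lists (Oc \<times> UNIV) \<Longrightarrow> cgroup_eq G Oc w w"
| sym: "cgroup_eq G Oc u v \<Longrightarrow> cgroup_eq G Oc v u"
| trans: "cgroup_eq G Oc u v \<Longrightarrow> cgroup_eq G Oc v w \<Longrightarrow> cgroup_eq G Oc u w"
| cancel: "u \<in> lists (Oc \<times> UNIV) \<Longrightarrow> v \<in> lists (Oc \<times> UNIV) \<Longrightarrow> g \<in> Oc \<Longrightarrow>
     cgroup_eq G Oc (u @ [(g, b), (g, \<not> b)] @ v) (u @ v)"
| rel: "u \<in> lists (Oc \<times> UNIV) \<Longrightarrow> v \<in> lists (Oc \<times> UNIV) \<Longrightarrow> g \<in> Oc \<Longrightarrow> h \<in> Oc \<Longrightarrow>
     cgroup_eq G Oc (u @ [(h, False), (g, True), (h, True)] @ v)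
                   (u @ [(inv\<^bsub>G\<^esub> h \<otimes>\<^bsub>G\<^esub> g \<otimes>\<^bsub>G\<^esub> h, True)] @ v)"

definition cgroup_rel :: "('a, 'b) monoid_scheme \<Rightarrow> 'a set \<Rightarrow> (('a \<times> bool) list \<times> ('a \<times> bool) list) set" where
  "cgroup_rel G Oc = {(u, v). cgroup_eq G Oc u v}"

definition C_group :: "('a, 'b) monoid_scheme \<Rightarrow> 'a set \<Rightarrow> ('a \<times> bool) list set monoid" where
  "C_group G Oc =
    \<lparr> carrier = lists (Oc \<times> UNIV) // cgroup_rel G Oc,
      monoid.mult = (\<lambda>A B. \<Union>x\<in>A. \<Union>y\<in>B. cgroup_rel G Oc `` {x @ y}),
      one = cgroup_rel G Oc `` {[]} \<rparr>"

end

theory Submission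
  imports Defs
begin

(*
  The C-group maps onto G by y_g \<mapsto> g, and conjugating y_g by an element c of the C-group gives
  y_{h^-1 g h} where h is the image of c; hence the kernel of this projection is central.
  As G is perfect, every element of G lifts to the commutator subgroup D.  Choosing one
  representative r in each conjugacy class contained in O together with a lift d_r \<in> D of r,
  the elements z_g = y_r d_r^-1 (r the representative of the class of g) are central,
  congruent to y_g modulo D and constant on conjugacy classes, so they satisfy the defining
  relations.  Thus y_g \<mapsto> z_g extends to an endomorphism \<sigma> with central image which is the
  identity modulo D and kills D; it is idempotent with kernel D, and
  x \<mapsto> (x \<sigma>(x)^-1, D x) is an isomorphism onto D \<times> (C-group / D).
*)

section \<open>Generators, commutators and central retractions\<close>

lemma (in group) mult_inv_cancel_left [simp]:
  "x \<in> carrier G \<Longrightarrow> y \<in> carrier G \<Longrightarrow> x \<otimes> (inv x \<otimes> y) = y"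
  by (simp add: m_assoc[symmetric])

lemma (in group) inv_mult_cancel_left [simp]:
  "x \<in> carrier G \<Longrightarrow> y \<in> carrier G \<Longrightarrow> inv x \<otimes> (x \<otimes> y) = y"
  by (simp add: m_assoc[symmetric])

lemma (in group) commute_generate:
  assumes "S \<subseteq> carrier G" "z \<in> carrier G" "\<And>s. s \<in> S \<Longrightarrow> z \<otimes> s = s \<otimes> z"
    and "x \<in> generate G S"
  shows "z \<otimes> x = x \<otimes> z"
  using assms(4)
proof (induction x rule: generate.induct)
  case (inv s)
  then have s: "s \<in> carrier G" using assms(1) by blast
  have "z \<otimes> inv s = inv s \<otimes> (s \<otimes> z) \<otimes> inv s"
    using s assms(2) by (simp add: m_assoc[symmetric])
  also have "\<dots> = inv s \<otimes> (z \<otimes> s) \<otimes> inv s"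
    using assms(3)[OF inv] by simp
  also have "\<dots> = inv s \<otimes> z"
    using s assms(2) by (simp add: m_assoc)
  finally show ?case .
next
  case (eng x y)
  have "x \<in> carrier G" "y \<in> carrier G"
    using eng.hyps generate_in_carrier[OF assms(1)] by auto
  with eng.IH assms(2) show ?case by (metis m_assoc)
qed (use assms in auto)

lemma (in normal) rcos_hom_eq_generate:
  assumes hom: "\<sigma> \<in> hom G G" and S: "S \<subseteq> carrier G"
    and gens: "\<And>s. s \<in> S \<Longrightarrow> H #> \<sigma> s = H #> s"
    and x: "x \<in> generate G S"
  shows "H #> \<sigma> x = H #> x"
proof -
  interpret \<sigma>: group_hom G G \<sigma>
    using hom by (simp add: group_hom_def group_hom_axioms_def is_group)
  from x show ?thesis
  proof (induction x rule: generate.induct)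
    case (inv s)
    then have "s \<in> carrier G" using S by blast
    then show ?case
      using gens[OF inv] by (simp flip: rcos_inv)
  next
    case (eng x y)
    have "x \<in> carrier G" "y \<in> carrier G"
      using eng.hyps generate_in_carrier[OF S] by auto
    with eng.IH show ?case by (simp flip: rcos_sum)
  qed (use gens in auto)
qed

lemma (in group_hom) derived_subset_kernel:
  assumes "\<And>x y. x \<in> carrier G \<Longrightarrow> y \<in> carrier G \<Longrightarrow> h x \<otimes>\<^bsub>H\<^esub> h y = h y \<otimes>\<^bsub>H\<^esub> h x"
  shows "derived G (carrier G) \<subseteq> kernel G H h"
  unfolding derived_def
proof (rule G.generate_subgroup_incl[OF _ subgroup_kernel], safe)
  fix a b assume a: "a \<in> carrier G" and b: "b \<in> carrier G"
  have "h (a \<otimes> b \<otimes> inv a \<otimes> inv b) = h b \<otimes>\<^bsub>H\<^esub> h a \<otimes>\<^bsub>H\<^esub> inv\<^bsub>H\<^esub> h a \<otimes>\<^bsub>H\<^esub> inv\<^bsub>H\<^esub> h b"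
    using assms a b by simp
  also have "\<dots> = \<one>\<^bsub>H\<^esub>"
    using a b by (simp add: H.m_assoc)
  finally show "a \<otimes> b \<otimes> inv a \<otimes> inv b \<in> kernel G H h"
    using a b by (simp add: kernel_def)
qed

lemma (in group) central_idempotent_splitting:
  assumes hom: "\<sigma> \<in> hom G G"
    and idem: "\<And>x. x \<in> carrier G \<Longrightarrow> \<sigma> (\<sigma> x) = \<sigma> x"
    and central: "\<And>x y. x \<in> carrier G \<Longrightarrow> y \<in> carrier G \<Longrightarrow> \<sigma> x \<otimes> y = y \<otimes> \<sigma> x"
  shows "(\<lambda>x. (x \<otimes> inv (\<sigma> x), kernel G G \<sigma> #> x))
           \<in> iso G (G\<lparr>carrier := kernel G G \<sigma>\<rparr> \<times>\<times> (G Mod kernel G G \<sigma>))"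
proof -
  define K where "K = kernel G G \<sigma>"
  interpret \<sigma>: group_hom G G \<sigma>
    using hom by (simp add: group_hom_def group_hom_axioms_def is_group)
  interpret K: normal K G
    unfolding K_def by (rule \<sigma>.normal_kernel)
  define \<Phi> where "\<Phi> x = (x \<otimes> inv (\<sigma> x), K #> x)" for x
  have in_K: "x \<in> K \<longleftrightarrow> x \<in> carrier G \<and> \<sigma> x = \<one>" for x
    unfolding K_def kernel_def by simp
  have fst_in_K: "x \<otimes> inv (\<sigma> x) \<in> K" if x: "x \<in> carrier G" for x
    using x idem[OF x] by (simp add: in_K)
  have coset_eq: "K #> x = K #> z" if "x \<in> carrier G" "z \<in> carrier G" "\<sigma> x = \<sigma> z" for x z
  proof (rule repr_independence)
    have "\<sigma> (z \<otimes> inv x) = \<one>" using that by simp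
    then show "z \<in> K #> x"
      using that K.rcos_module_rev[OF is_group] by (simp add: in_K)
  qed (use that K.subgroup_axioms in auto)
  have "\<Phi> \<in> hom G (G\<lparr>carrier := K\<rparr> \<times>\<times> (G Mod K))"
  proof (rule homI)
    fix x assume "x \<in> carrier G"
    then show "\<Phi> x \<in> carrier (G\<lparr>carrier := K\<rparr> \<times>\<times> (G Mod K))"
      using fst_in_K rcosetsI[OF K.subset] by (simp add: \<Phi>_def FactGroup_def)
  next
    fix x y assume x: "x \<in> carrier G" and y: "y \<in> carrier G"
    have "x \<otimes> y \<otimes> inv (\<sigma> (x \<otimes> y)) = x \<otimes> (y \<otimes> inv (\<sigma> y) \<otimes> \<sigma> (inv x))"
      using x y by (simp add: inv_mult_group m_assoc)
    also have "\<dots> = x \<otimes> inv (\<sigma> x) \<otimes> (y \<otimes> inv (\<sigma> y))"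
      using x y central[of "inv x" "y \<otimes> inv (\<sigma> y)"] by (simp add: m_assoc)
    finally show "\<Phi> (x \<otimes> y) = \<Phi> x \<otimes>\<^bsub>G\<lparr>carrier := K\<rparr> \<times>\<times> (G Mod K)\<^esub> \<Phi> y"
      using x y by (simp add: \<Phi>_def K.rcos_sum)
  qed
  then interpret \<Phi>: group_hom G "G\<lparr>carrier := K\<rparr> \<times>\<times> (G Mod K)" \<Phi>
    by (simp add: group_hom_def group_hom_axioms_def is_group DirProd_group
        subgroup_imp_group K.subgroup_axioms K.factorgroup_is_group)
  have "(d, Z) \<in> \<Phi> ` carrier G" if d: "d \<in> K" and Z: "Z \<in> carrier (G Mod K)" for d Z
  proof -
    obtain z where z: "z \<in> carrier G" "Z = K #> z"
      using Z by (auto simp: carrier_FactGroup)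
    have dG: "d \<in> carrier G" and \<sigma>d: "\<sigma> d = \<one>" using d by (simp_all add: in_K)
    define x where "x = d \<otimes> \<sigma> z"
    have x: "x \<in> carrier G" and \<sigma>x: "\<sigma> x = \<sigma> z"
      using dG z \<sigma>d idem by (simp_all add: x_def)
    have "\<Phi> x = (d, Z)"
      using x dG z \<sigma>x coset_eq[OF x z(1) \<sigma>x] by (simp add: \<Phi>_def x_def m_assoc)
    with x show ?thesis by (metis rev_image_eqI)
  qed
  then have "carrier (G\<lparr>carrier := K\<rparr> \<times>\<times> (G Mod K)) \<subseteq> \<Phi> ` carrier G"
    by auto
  moreover have "x = \<one>" if x: "x \<in> carrier G" and "\<Phi> x = \<one>\<^bsub>G\<lparr>carrier := K\<rparr> \<times>\<times> (G Mod K)\<^esub>" for x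
  proof -
    have "K #> x = K #> \<one>" "x \<otimes> inv (\<sigma> x) = \<one>" using that by (simp_all add: \<Phi>_def K.subset)
    then have "x \<in> K" using rcos_self[OF x K.subgroup_axioms] by (simp add: K.subset)
    then show ?thesis using \<open>x \<otimes> inv (\<sigma> x) = \<one>\<close> by (simp add: in_K)
  qed
  ultimately show ?thesis
    unfolding \<Phi>_def[symmetric] K_def[symmetric] by (simp add: \<Phi>.iso_iff)
qed

section \<open>Conjugacy classes\<close>

lemma (in group) conj_class_self: "g \<in> carrier G \<Longrightarrow> g \<in> conj_class G g"
  unfolding conj_class_def by (rule CollectI, rule exI[of _ \<one>]) simp

lemma (in group) conj_class_conj_closed:
  assumes "g \<in> carrier G" "x \<in> conj_class G g" "h \<in> carrier G"
  shows "inv h \<otimes> x \<otimes> h \<in> conj_class G g"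
proof -
  obtain k where k: "k \<in> carrier G" "x = inv k \<otimes> g \<otimes> k"
    using assms(2) by (auto simp: conj_class_def)
  then have "inv h \<otimes> x \<otimes> h = inv (k \<otimes> h) \<otimes> g \<otimes> (k \<otimes> h)"
    using assms(1,3) by (simp add: m_assoc inv_mult_group)
  then show ?thesis
    unfolding conj_class_def using k assms(3) by blast
qed

lemma (in group) conj_class_subset:
  assumes "g \<in> carrier G" "x \<in> conj_class G g"
  shows "conj_class G x \<subseteq> conj_class G g"
  using conj_class_conj_closed[OF assms] by (auto simp: conj_class_def)

lemma (in group) conj_class_conj:
  assumes "g \<in> carrier G" "h \<in> carrier G"
  shows "conj_class G (inv h \<otimes> g \<otimes> h) = conj_class G g"
proof
  have conj: "inv h \<otimes> g \<otimes> h \<in> conj_class G g"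
    using conj_class_conj_closed[OF assms(1) conj_class_self[OF assms(1)] assms(2)] .
  then show "conj_class G (inv h \<otimes> g \<otimes> h) \<subseteq> conj_class G g"
    using assms(1) conj_class_subset by blast
  have "inv (inv h) \<otimes> (inv h \<otimes> g \<otimes> h) \<otimes> inv h = g"
    using assms by (simp add: m_assoc)
  then have "g \<in> conj_class G (inv h \<otimes> g \<otimes> h)"
    using conj_class_conj_closed[OF _ conj_class_self, of "inv h \<otimes> g \<otimes> h" "inv h"] assms by simp
  then show "conj_class G g \<subseteq> conj_class G (inv h \<otimes> g \<otimes> h)"
    using assms by (intro conj_class_subset) auto
qed

section \<open>The C-group as a quotient of words\<close>

locale conj_invariant_subset = group G for G :: "('a, 'b) monoid_scheme" (structure) +
  fixes Oc :: "'a set"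
  assumes Oc_subset: "Oc \<subseteq> carrier G"
    and Oc_conj_closed: "\<lbrakk>g \<in> Oc; h \<in> carrier G\<rbrakk> \<Longrightarrow> inv h \<otimes> g \<otimes> h \<in> Oc"
begin

abbreviation "words \<equiv> lists (Oc \<times> (UNIV :: bool set))"
abbreviation "CG \<equiv> C_group G Oc"
abbreviation "ceq \<equiv> cgroup_eq G Oc"

lemma cgroup_eq_words: "ceq u v \<Longrightarrow> u \<in> words \<and> v \<in> words"
proof (induction rule: cgroup_eq.induct)
  case (rel u v g h)
  then have "inv h \<otimes> g \<otimes> h \<in> Oc" using Oc_conj_closed Oc_subset by auto
  with rel show ?case by auto
qed auto

lemma equiv_cgroup_rel: "equiv words (cgroup_rel G Oc)"
proof (rule equivI)
  show "cgroup_rel G Oc \<subseteq> words \<times> words"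
    unfolding cgroup_rel_def using cgroup_eq_words by blast
  show "refl_on words (cgroup_rel G Oc)"
    using cgroup_eq_words by (auto simp: refl_on_def cgroup_rel_def intro: cgroup_eq.refl)
  show "sym (cgroup_rel G Oc)"
    unfolding sym_def cgroup_rel_def by (blast intro: cgroup_eq.sym)
  show "trans (cgroup_rel G Oc)"
    unfolding trans_def cgroup_rel_def by (blast intro: cgroup_eq.trans)
qed

lemma cgroup_eq_append_context:
  "ceq u v \<Longrightarrow> w \<in> words \<Longrightarrow> ceq (w @ u) (w @ v) \<and> ceq (u @ w) (v @ w)"
proof (induction rule: cgroup_eq.induct)
  case (refl u)
  then show ?case by (auto intro!: cgroup_eq.refl)
next
  case (sym u v)
  then show ?case by (auto intro: cgroup_eq.sym)
next
  case (trans u v w')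
  then show ?case by (meson cgroup_eq.trans)
next
  case (cancel u v g b)
  have "ceq ((w @ u) @ [(g, b), (g, \<not> b)] @ v) ((w @ u) @ v)"
    "ceq (u @ [(g, b), (g, \<not> b)] @ (v @ w)) (u @ (v @ w))"
    by (rule cgroup_eq.cancel; use cancel in simp)+
  then show ?case by simp
next
  case (rel u v g h)
  have "ceq ((w @ u) @ [(h, False), (g, True), (h, True)] @ v)
            ((w @ u) @ [(inv h \<otimes> g \<otimes> h, True)] @ v)"
    "ceq (u @ [(h, False), (g, True), (h, True)] @ (v @ w))
         (u @ [(inv h \<otimes> g \<otimes> h, True)] @ (v @ w))"
    by (rule cgroup_eq.rel; use rel in simp)+
  then show ?case by simp
qed

lemma cgroup_eq_append: "ceq u u' \<Longrightarrow> ceq v v' \<Longrightarrow> ceq (u @ v) (u' @ v')"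
  by (meson cgroup_eq.trans cgroup_eq_append_context cgroup_eq_words)

definition wclass :: "('a \<times> bool) list \<Rightarrow> ('a \<times> bool) list set" where
  "wclass w = cgroup_rel G Oc `` {w}"

lemma mem_wclass: "x \<in> wclass u \<longleftrightarrow> ceq u x"
  by (simp add: wclass_def cgroup_rel_def)

lemma wclass_eqI: "ceq u v \<Longrightarrow> wclass u = wclass v"
  unfolding wclass_def using equiv_class_eq[OF equiv_cgroup_rel] by (simp add: cgroup_rel_def)

lemma carrier_C_group: "carrier CG = wclass ` words"
  by (auto simp: C_group_def quotient_def wclass_def)

lemma wclass_in_carrier: "w \<in> words \<Longrightarrow> wclass w \<in> carrier CG"
  by (simp add: carrier_C_group)

lemma one_C_group: "\<one>\<^bsub>CG\<^esub> = wclass []"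
  by (simp add: C_group_def wclass_def)

lemma mult_wclass:
  assumes "u \<in> words" "v \<in> words"
  shows "wclass u \<otimes>\<^bsub>CG\<^esub> wclass v = wclass (u @ v)"
proof -
  have "cgroup_rel G Oc `` {x @ y} = wclass (u @ v)" if "x \<in> wclass u" "y \<in> wclass v" for x y
  proof -
    have "ceq (u @ v) (x @ y)"
      using that by (simp add: mem_wclass cgroup_eq_append)
    then show ?thesis
      by (metis cgroup_eq.sym wclass_def wclass_eqI)
  qed
  moreover have "u \<in> wclass u" "v \<in> wclass v"
    using assms by (simp_all add: mem_wclass cgroup_eq.refl)
  ultimately show ?thesis
    by (auto simp: C_group_def)
qed

definition winv :: "('a \<times> bool) list \<Rightarrow> ('a \<times> bool) list" where
  "winv w = rev (map (\<lambda>(g, b). (g, \<not> b)) w)"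

lemma winv_words: "w \<in> words \<Longrightarrow> winv w \<in> words"
  by (auto simp: winv_def)

lemma winv_append_cancel: "w \<in> words \<Longrightarrow> ceq (winv w @ w) []"
proof (induction w)
  case Nil
  then show ?case by (auto simp: winv_def intro: cgroup_eq.refl)
next
  case (Cons a w)
  obtain g b where a: "a = (g, b)" by force
  have "ceq (winv w @ [(g, \<not> b), (g, \<not> \<not> b)] @ w) (winv w @ w)"
    using Cons a winv_words by (intro cgroup_eq.cancel) auto
  then show ?case
    using Cons by (auto simp: a winv_def intro: cgroup_eq.trans)
qed

lemma group_C_group: "group CG"
proof (rule groupI)
  fix x y assume "x \<in> carrier CG" "y \<in> carrier CG"
  then obtain u v where "u \<in> words" "v \<in> words" "x = wclass u" "y = wclass v"
    by (auto simp: carrier_C_group)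
  then show "x \<otimes>\<^bsub>CG\<^esub> y \<in> carrier CG"
    by (simp add: mult_wclass wclass_in_carrier)
next
  show "\<one>\<^bsub>CG\<^esub> \<in> carrier CG"
    by (auto simp: carrier_C_group one_C_group)
next
  fix x y z assume "x \<in> carrier CG" "y \<in> carrier CG" "z \<in> carrier CG"
  then obtain u v w where "u \<in> words" "v \<in> words" "w \<in> words"
    and "x = wclass u" "y = wclass v" "z = wclass w"
    by (auto simp: carrier_C_group)
  then show "x \<otimes>\<^bsub>CG\<^esub> y \<otimes>\<^bsub>CG\<^esub> z = x \<otimes>\<^bsub>CG\<^esub> (y \<otimes>\<^bsub>CG\<^esub> z)"
    by (simp add: mult_wclass)
next
  fix x assume "x \<in> carrier CG"
  then show "\<one>\<^bsub>CG\<^esub> \<otimes>\<^bsub>CG\<^esub> x = x"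
    using mult_wclass[of "[]"] by (auto simp: carrier_C_group one_C_group)
next
  fix x assume "x \<in> carrier CG"
  then obtain w where w: "w \<in> words" "x = wclass w"
    by (auto simp: carrier_C_group)
  then have "wclass (winv w) \<otimes>\<^bsub>CG\<^esub> x = \<one>\<^bsub>CG\<^esub>"
    using wclass_eqI[OF winv_append_cancel] winv_words by (simp add: mult_wclass one_C_group)
  moreover have "wclass (winv w) \<in> carrier CG"
    using w winv_words by (simp add: wclass_in_carrier)
  ultimately show "\<exists>y\<in>carrier CG. y \<otimes>\<^bsub>CG\<^esub> x = \<one>\<^bsub>CG\<^esub>" by blast
qed

lemma inv_wclass_single: "g \<in> Oc \<Longrightarrow> inv\<^bsub>CG\<^esub> (wclass [(g, b)]) = wclass [(g, \<not> b)]"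
proof -
  assume g: "g \<in> Oc"
  interpret CG: group CG by (rule group_C_group)
  have "wclass [(g, \<not> b)] \<otimes>\<^bsub>CG\<^esub> wclass [(g, b)] = \<one>\<^bsub>CG\<^esub>"
    using g cgroup_eq.cancel[of "[]" Oc "[]" g G "\<not> b"]
    by (simp add: mult_wclass one_C_group wclass_eqI)
  then show ?thesis
    using g by (simp add: CG.inv_equality wclass_in_carrier)
qed

end

section \<open>Universal property and the projection onto G\<close>

definition word_eval :: "('c, 'd) monoid_scheme \<Rightarrow> ('a \<Rightarrow> 'c) \<Rightarrow> ('a \<times> bool) list \<Rightarrow> 'c" where
  "word_eval H f w = foldr (\<lambda>(g, b) x. (if b then f g else inv\<^bsub>H\<^esub> (f g)) \<otimes>\<^bsub>H\<^esub> x) w \<one>\<^bsub>H\<^esub>"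

lemma word_eval_Nil [simp]: "word_eval H f [] = \<one>\<^bsub>H\<^esub>"
  by (simp add: word_eval_def)

lemma word_eval_Cons [simp]:
  "word_eval H f ((g, b) # w) = (if b then f g else inv\<^bsub>H\<^esub> (f g)) \<otimes>\<^bsub>H\<^esub> word_eval H f w"
  by (simp add: word_eval_def)

context conj_invariant_subset
begin

definition conj_compatible :: "('c, 'd) monoid_scheme \<Rightarrow> ('a \<Rightarrow> 'c) \<Rightarrow> bool" where
  "conj_compatible H f \<longleftrightarrow> group H \<and> f ` Oc \<subseteq> carrier H \<and>
     (\<forall>g\<in>Oc. \<forall>h\<in>Oc. inv\<^bsub>H\<^esub> (f h) \<otimes>\<^bsub>H\<^esub> f g \<otimes>\<^bsub>H\<^esub> f h = f (inv h \<otimes> g \<otimes> h))"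

lemma conj_compatible_in_carrier: "conj_compatible H f \<Longrightarrow> g \<in> Oc \<Longrightarrow> f g \<in> carrier H"
  by (auto simp: conj_compatible_def)

lemma word_eval_closed:
  assumes f: "conj_compatible H f" and "w \<in> words"
  shows "word_eval H f w \<in> carrier H"
proof -
  interpret H: group H using f by (simp add: conj_compatible_def)
  show ?thesis
    using assms(2) conj_compatible_in_carrier[OF f] by (induction w) auto
qed

lemma word_eval_append:
  "conj_compatible H f \<Longrightarrow> u \<in> words \<Longrightarrow> v \<in> words \<Longrightarrow>
    word_eval H f (u @ v) = word_eval H f u \<otimes>\<^bsub>H\<^esub> word_eval H f v"
proof (induction u)
  case Nil
  interpret H: group H using Nil by (simp add: conj_compatible_def)
  show ?case using Nil word_eval_closed[OF Nil(1,3)] by simp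
next
  case (Cons a u)
  interpret H: group H using Cons by (simp add: conj_compatible_def)
  obtain g b where a: "a = (g, b)" by force
  have "g \<in> Oc" "u \<in> words" using Cons.prems a by auto
  then show ?case
    using Cons a word_eval_closed[OF Cons.prems(1)] conj_compatible_in_carrier[OF Cons.prems(1)]
    by (simp add: H.m_assoc)
qed

lemma word_eval_cong: "ceq u v \<Longrightarrow> conj_compatible H f \<Longrightarrow> word_eval H f u = word_eval H f v"
proof (induction rule: cgroup_eq.induct)
  case (cancel u v g b)
  interpret H: group H using cancel by (simp add: conj_compatible_def)
  have "f g \<in> carrier H" using cancel by (auto simp: conj_compatible_def)
  then have "word_eval H f ([(g, b), (g, \<not> b)] @ v) = word_eval H f v"
    using word_eval_closed[OF cancel(4,2)] by (simp add: H.m_assoc[symmetric])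
  then show ?case
    using cancel word_eval_append[OF cancel(4)] by simp
next
  case (rel u v g h)
  interpret H: group H using rel by (simp add: conj_compatible_def)
  have "f g \<in> carrier H" "f h \<in> carrier H" "inv h \<otimes> g \<otimes> h \<in> Oc"
    using rel Oc_conj_closed Oc_subset by (auto simp: conj_compatible_def)
  then have "word_eval H f ([(h, False), (g, True), (h, True)] @ v)
      = word_eval H f ([(inv h \<otimes> g \<otimes> h, True)] @ v)"
    using word_eval_closed[OF rel(5,2)] rel(3,4,5) by (simp add: H.m_assoc[symmetric] conj_compatible_def)
  with \<open>inv h \<otimes> g \<otimes> h \<in> Oc\<close> show ?case
    using rel word_eval_append[OF rel(5) rel(1)] by simp
qed auto

definition C_lift :: "('c, 'd) monoid_scheme \<Rightarrow> ('a \<Rightarrow> 'c) \<Rightarrow> ('a \<times> bool) list set \<Rightarrow> 'c" where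
  "C_lift H f A = word_eval H f (SOME w. w \<in> A)"

lemma C_lift_wclass:
  assumes f: "conj_compatible H f" and w: "w \<in> words"
  shows "C_lift H f (wclass w) = word_eval H f w"
proof -
  have "w \<in> wclass w"
    using w by (simp add: mem_wclass cgroup_eq.refl)
  then have "ceq w (SOME w'. w' \<in> wclass w)"
    unfolding mem_wclass[symmetric] by (rule someI)
  then show ?thesis
    unfolding C_lift_def using word_eval_cong f by metis
qed

lemma C_lift_hom: "conj_compatible H f \<Longrightarrow> C_lift H f \<in> hom CG H"
proof (rule homI)
  fix x assume f: "conj_compatible H f" and "x \<in> carrier CG"
  then obtain w where "w \<in> words" "x = wclass w"
    by (auto simp: carrier_C_group)
  then show "C_lift H f x \<in> carrier H"
    using f by (simp add: C_lift_wclass word_eval_closed)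
next
  fix x y assume f: "conj_compatible H f" and "x \<in> carrier CG" "y \<in> carrier CG"
  then obtain u v where "u \<in> words" "x = wclass u" "v \<in> words" "y = wclass v"
    by (auto simp: carrier_C_group)
  then show "C_lift H f (x \<otimes>\<^bsub>CG\<^esub> y) = C_lift H f x \<otimes>\<^bsub>H\<^esub> C_lift H f y"
    using f by (simp add: mult_wclass C_lift_wclass word_eval_append)
qed

definition gen :: "'a \<Rightarrow> ('a \<times> bool) list set" where
  "gen g = wclass [(g, True)]"

lemma gen_in_carrier: "g \<in> Oc \<Longrightarrow> gen g \<in> carrier CG"
  by (simp add: gen_def wclass_in_carrier)

lemma C_lift_gen: "conj_compatible H f \<Longrightarrow> g \<in> Oc \<Longrightarrow> C_lift H f (gen g) = f g"
  by (auto simp: gen_def C_lift_wclass conj_compatible_def group.is_monoid)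

lemma wclass_Cons:
  assumes "g \<in> Oc" "w \<in> words"
  shows "wclass ((g, b) # w) = (if b then gen g else inv\<^bsub>CG\<^esub> (gen g)) \<otimes>\<^bsub>CG\<^esub> wclass w"
  using assms mult_wclass[of "[(g, b)]" w] inv_wclass_single[of g True]
  by (cases b) (simp_all add: gen_def)

lemma generate_gen: "generate CG (gen ` Oc) = carrier CG"
proof
  interpret CG: group CG by (rule group_C_group)
  show "generate CG (gen ` Oc) \<subseteq> carrier CG"
    using gen_in_carrier CG.generate_in_carrier[of "gen ` Oc"] by blast
  have "wclass w \<in> generate CG (gen ` Oc)" if "w \<in> words" for w
    using that
  proof (induction w)
    case Nil
    then show ?case by (simp add: generate.one flip: one_C_group)
  next
    case (Cons a w)
    obtain g b where a: "a = (g, b)" by force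
    have "(if b then gen g else inv\<^bsub>CG\<^esub> (gen g)) \<in> generate CG (gen ` Oc)"
      using Cons a by (auto intro: generate.incl generate.inv)
    then show ?case
      using Cons a by (simp add: wclass_Cons generate.eng)
  qed
  then show "carrier CG \<subseteq> generate CG (gen ` Oc)"
    by (auto simp: carrier_C_group)
qed

lemma gen_conj:
  assumes "g \<in> Oc" "h \<in> Oc"
  shows "inv\<^bsub>CG\<^esub> (gen h) \<otimes>\<^bsub>CG\<^esub> gen g \<otimes>\<^bsub>CG\<^esub> gen h = gen (inv h \<otimes> g \<otimes> h)"
proof -
  interpret CG: group CG by (rule group_C_group)
  have "wclass [(h, False), (g, True), (h, True)] = gen (inv h \<otimes> g \<otimes> h)"
    unfolding gen_def using cgroup_eq.rel[of "[]" Oc "[]" g h G] assms by (simp add: wclass_eqI)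
  then show ?thesis
    using assms by (simp add: wclass_Cons gen_in_carrier CG.m_assoc flip: one_C_group)
qed

lemma gen_conj_inv:
  assumes g: "g \<in> Oc" and h: "h \<in> Oc"
  shows "gen h \<otimes>\<^bsub>CG\<^esub> gen g \<otimes>\<^bsub>CG\<^esub> inv\<^bsub>CG\<^esub> (gen h) = gen (h \<otimes> g \<otimes> inv h)"
proof -
  interpret CG: group CG by (rule group_C_group)
  have hG: "h \<in> carrier G" and gG: "g \<in> carrier G"
    using g h Oc_subset by auto
  define g' where "g' = h \<otimes> g \<otimes> inv h"
  have g': "g' \<in> Oc"
    using Oc_conj_closed[OF g, of "inv h"] hG by (simp add: g'_def)
  have "inv h \<otimes> g' \<otimes> h = g"
    using hG gG by (simp add: g'_def m_assoc)
  then have "gen g = inv\<^bsub>CG\<^esub> (gen h) \<otimes>\<^bsub>CG\<^esub> gen g' \<otimes>\<^bsub>CG\<^esub> gen h"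
    using gen_conj[OF g' h] by simp
  then show ?thesis
    using h g' by (simp add: gen_in_carrier CG.m_assoc g'_def)
qed

abbreviation proj :: "('a \<times> bool) list set \<Rightarrow> 'a" where
  "proj \<equiv> C_lift G (\<lambda>g. g)"

lemma conj_compatible_id: "conj_compatible G (\<lambda>g. g)"
  using Oc_subset by (auto simp: conj_compatible_def is_group)

lemma group_hom_proj: "group_hom CG G proj"
  using C_lift_hom[OF conj_compatible_id]
  by (simp add: group_hom_def group_hom_axioms_def group_C_group is_group)

lemma proj_gen: "g \<in> Oc \<Longrightarrow> proj (gen g) = g"
  by (rule C_lift_gen[OF conj_compatible_id])

lemma conj_gen_eq:
  assumes "c \<in> carrier CG" "g \<in> Oc"
  shows "inv\<^bsub>CG\<^esub> c \<otimes>\<^bsub>CG\<^esub> gen g \<otimes>\<^bsub>CG\<^esub> c = gen (inv (proj c) \<otimes> g \<otimes> proj c)"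
proof -
  interpret CG: group CG by (rule group_C_group)
  interpret proj: group_hom CG G proj by (rule group_hom_proj)
  have "c \<in> generate CG (gen ` Oc)"
    using assms(1) by (simp add: generate_gen)
  then show ?thesis
    using assms(2)
  proof (induction c arbitrary: g rule: generate.induct)
    case one
    then show ?case using Oc_subset by (auto simp: gen_in_carrier)
  next
    case (incl c)
    then obtain h where "h \<in> Oc" "c = gen h" by blast
    with incl.prems show ?case by (simp add: gen_conj proj_gen)
  next
    case (inv c)
    then obtain h where "h \<in> Oc" "c = gen h" by blast
    with inv.prems Oc_subset show ?case
      by (auto simp: gen_in_carrier proj_gen gen_conj_inv)
  next
    case (eng c1 c2)
    have c: "c1 \<in> carrier CG" "c2 \<in> carrier CG"
      using eng.hyps generate_gen by auto
    have g1: "inv (proj c1) \<otimes> g \<otimes> proj c1 \<in> Oc"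
      using Oc_conj_closed eng.prems c by simp
    have "inv\<^bsub>CG\<^esub> (c1 \<otimes>\<^bsub>CG\<^esub> c2) \<otimes>\<^bsub>CG\<^esub> gen g \<otimes>\<^bsub>CG\<^esub> (c1 \<otimes>\<^bsub>CG\<^esub> c2)
        = inv\<^bsub>CG\<^esub> c2 \<otimes>\<^bsub>CG\<^esub> (inv\<^bsub>CG\<^esub> c1 \<otimes>\<^bsub>CG\<^esub> gen g \<otimes>\<^bsub>CG\<^esub> c1) \<otimes>\<^bsub>CG\<^esub> c2"
      using c eng.prems by (simp add: gen_in_carrier CG.inv_mult_group CG.m_assoc)
    also have "\<dots> = gen (inv (proj c2) \<otimes> (inv (proj c1) \<otimes> g \<otimes> proj c1) \<otimes> proj c2)"
      using eng.IH eng.prems g1 by simp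
    also have "\<dots> = gen (inv (proj (c1 \<otimes>\<^bsub>CG\<^esub> c2)) \<otimes> g \<otimes> proj (c1 \<otimes>\<^bsub>CG\<^esub> c2))"
      using c eng.prems Oc_subset by (auto simp: inv_mult_group m_assoc)
    finally show ?case .
  qed
qed

lemma kernel_proj_central:
  assumes z: "z \<in> carrier CG" "proj z = \<one>" and x: "x \<in> carrier CG"
  shows "z \<otimes>\<^bsub>CG\<^esub> x = x \<otimes>\<^bsub>CG\<^esub> z"
proof -
  interpret CG: group CG by (rule group_C_group)
  have "z \<otimes>\<^bsub>CG\<^esub> s = s \<otimes>\<^bsub>CG\<^esub> z" if "s \<in> gen ` Oc" for s
  proof -
    obtain g where g: "g \<in> Oc" "s = gen g" using \<open>s \<in> gen ` Oc\<close> by blast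
    have "inv\<^bsub>CG\<^esub> z \<otimes>\<^bsub>CG\<^esub> s \<otimes>\<^bsub>CG\<^esub> z = s"
      using conj_gen_eq[OF z(1) g(1)] z(2) g Oc_subset by auto
    then have "z \<otimes>\<^bsub>CG\<^esub> (inv\<^bsub>CG\<^esub> z \<otimes>\<^bsub>CG\<^esub> s \<otimes>\<^bsub>CG\<^esub> z) = z \<otimes>\<^bsub>CG\<^esub> s"
      by simp
    then show ?thesis
      using z(1) g gen_in_carrier by (simp add: CG.m_assoc)
  qed
  moreover have "gen ` Oc \<subseteq> carrier CG"
    using gen_in_carrier by blast
  ultimately show ?thesis
    using CG.commute_generate z(1) x by (simp add: generate_gen)
qed

end

section \<open>The perfect case\<close>

locale perfect_conj_invariant_subset = conj_invariant_subset +
  assumes generate_Oc: "generate G Oc = carrier G"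
    and perfect: "derived G (carrier G) = carrier G"
begin

abbreviation D :: "('a \<times> bool) list set set" where
  "D \<equiv> derived CG (carrier CG)"

lemma derived_normal: "D \<lhd> CG"
  using group.derived_is_normal[OF group_C_group group.normal_self[OF group_C_group]] .

lemma proj_derived: "proj ` D = carrier G"
proof -
  interpret proj: group_hom CG G proj by (rule group_hom_proj)
  have "proj ` gen ` Oc = Oc"
    by (simp add: image_image proj_gen)
  have "proj ` carrier CG = proj ` generate CG (gen ` Oc)"
    by (simp add: generate_gen)
  also have "\<dots> = generate G (proj ` gen ` Oc)"
    using gen_in_carrier by (intro proj.generate_img[symmetric]) blast
  also have "\<dots> = carrier G"
    using \<open>proj ` gen ` Oc = Oc\<close> generate_Oc by simp
  finally have "proj ` carrier CG = carrier G" .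
  then show ?thesis
    using proj.derived_img[of "carrier CG"] perfect by simp
qed

definition conj_rep :: "'a \<Rightarrow> 'a" where
  "conj_rep g = (SOME r. r \<in> conj_class G g)"

lemma conj_rep_in_conj_class: "g \<in> carrier G \<Longrightarrow> conj_rep g \<in> conj_class G g"
  unfolding conj_rep_def by (rule someI[of _ g]) (rule conj_class_self)

lemma conj_rep_in_Oc: "g \<in> Oc \<Longrightarrow> conj_rep g \<in> Oc"
proof -
  assume g: "g \<in> Oc"
  then obtain h where "h \<in> carrier G" "conj_rep g = inv h \<otimes> g \<otimes> h"
    using conj_rep_in_conj_class[of g] Oc_subset by (auto simp: conj_class_def)
  with g show ?thesis by (simp add: Oc_conj_closed)
qed

lemma conj_rep_conj: "g \<in> carrier G \<Longrightarrow> h \<in> carrier G \<Longrightarrow> conj_rep (inv h \<otimes> g \<otimes> h) = conj_rep g"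
  by (simp add: conj_rep_def conj_class_conj)

definition derived_lift :: "'a \<Rightarrow> ('a \<times> bool) list set" where
  "derived_lift r = (SOME d. d \<in> D \<and> proj d = r)"

lemma derived_lift: "r \<in> carrier G \<Longrightarrow> derived_lift r \<in> D \<and> proj (derived_lift r) = r"
proof -
  assume "r \<in> carrier G"
  then have "r \<in> proj ` D"
    by (simp only: proj_derived)
  then have "\<exists>d. d \<in> D \<and> proj d = r"
    by blast
  then show ?thesis
    unfolding derived_lift_def by (rule someI_ex)
qed

(* Lifting the class representative rather than g itself makes central_gen constant on
   conjugacy classes; for central values this is exactly the defining relation. *)
definition central_gen :: "'a \<Rightarrow> ('a \<times> bool) list set" where
  "central_gen g = gen (conj_rep g) \<otimes>\<^bsub>CG\<^esub> inv\<^bsub>CG\<^esub> (derived_lift (conj_rep g))"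

lemma derived_subset_carrier: "D \<subseteq> carrier CG"
  using derived_normal by (simp add: normal_def subgroup.subset)

lemma central_gen_in_carrier: "g \<in> Oc \<Longrightarrow> central_gen g \<in> carrier CG"
proof -
  assume g: "g \<in> Oc"
  interpret CG: group CG by (rule group_C_group)
  have "derived_lift (conj_rep g) \<in> carrier CG"
    using derived_lift conj_rep_in_Oc[OF g] Oc_subset derived_subset_carrier by blast
  then show ?thesis
    unfolding central_gen_def using conj_rep_in_Oc[OF g] gen_in_carrier by simp
qed

lemma proj_central_gen: "g \<in> Oc \<Longrightarrow> proj (central_gen g) = \<one>"
proof -
  assume g: "g \<in> Oc"
  interpret proj: group_hom CG G proj by (rule group_hom_proj)
  have r: "conj_rep g \<in> Oc" "conj_rep g \<in> carrier G"
    using conj_rep_in_Oc g Oc_subset by auto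
  then have "derived_lift (conj_rep g) \<in> carrier CG" "proj (derived_lift (conj_rep g)) = conj_rep g"
    using derived_lift derived_subset_carrier by auto
  then show ?thesis
    unfolding central_gen_def using r gen_in_carrier proj_gen by simp
qed

lemma central_gen_central: "g \<in> Oc \<Longrightarrow> x \<in> carrier CG \<Longrightarrow> central_gen g \<otimes>\<^bsub>CG\<^esub> x = x \<otimes>\<^bsub>CG\<^esub> central_gen g"
  by (rule kernel_proj_central[OF central_gen_in_carrier proj_central_gen])

lemma conj_compatible_central_gen: "conj_compatible CG central_gen"
  unfolding conj_compatible_def
proof (intro conjI ballI)
  interpret CG: group CG by (rule group_C_group)
  show "group CG" "central_gen ` Oc \<subseteq> carrier CG"
    using CG.is_group central_gen_in_carrier by auto
  fix g h assume g: "g \<in> Oc" and h: "h \<in> Oc"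
  have "conj_rep (inv h \<otimes> g \<otimes> h) = conj_rep g"
    using conj_rep_conj g h Oc_subset by blast
  moreover have "inv\<^bsub>CG\<^esub> (central_gen h) \<otimes>\<^bsub>CG\<^esub> central_gen g \<otimes>\<^bsub>CG\<^esub> central_gen h = central_gen g"
    using central_gen_central[OF g, of "central_gen h"] central_gen_in_carrier g h
    by (simp add: CG.m_assoc)
  ultimately show "inv\<^bsub>CG\<^esub> (central_gen h) \<otimes>\<^bsub>CG\<^esub> central_gen g \<otimes>\<^bsub>CG\<^esub> central_gen h
      = central_gen (inv h \<otimes> g \<otimes> h)"
    by (simp add: central_gen_def)
qed

lemma rcos_central_gen: "g \<in> Oc \<Longrightarrow> D #>\<^bsub>CG\<^esub> central_gen g = D #>\<^bsub>CG\<^esub> gen g"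
proof -
  assume g: "g \<in> Oc"
  interpret CG: group CG by (rule group_C_group)
  interpret D: normal D CG by (rule derived_normal)
  obtain k where k: "k \<in> carrier G" "conj_rep g = inv k \<otimes> g \<otimes> k"
    using conj_rep_in_conj_class[of g] g Oc_subset by (auto simp: conj_class_def)
  have "k \<in> proj ` D"
    using k(1) by (simp only: proj_derived)
  then obtain c where c: "c \<in> carrier CG" "proj c = k"
    using derived_subset_carrier by blast
  define d where "d = derived_lift (conj_rep g)"
  have d: "d \<in> D" "d \<in> carrier CG"
    using derived_lift conj_rep_in_Oc g Oc_subset derived_subset_carrier by (auto simp: d_def)
  have y: "gen g \<in> carrier CG"
    using g by (rule gen_in_carrier)
  have "inv\<^bsub>CG\<^esub> c \<otimes>\<^bsub>CG\<^esub> gen g \<otimes>\<^bsub>CG\<^esub> inv\<^bsub>CG\<^esub> (inv\<^bsub>CG\<^esub> c) \<otimes>\<^bsub>CG\<^esub> inv\<^bsub>CG\<^esub> (gen g) \<in> D"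
    unfolding derived_def using c(1) y by (blast intro: generate.incl)
  then have "inv\<^bsub>CG\<^esub> c \<otimes>\<^bsub>CG\<^esub> gen g \<otimes>\<^bsub>CG\<^esub> c \<otimes>\<^bsub>CG\<^esub> inv\<^bsub>CG\<^esub> (gen g)
      \<otimes>\<^bsub>CG\<^esub> (gen g \<otimes>\<^bsub>CG\<^esub> inv\<^bsub>CG\<^esub> d \<otimes>\<^bsub>CG\<^esub> inv\<^bsub>CG\<^esub> (gen g)) \<in> D"
    using c(1) y D.inv_op_closed2[OF y D.m_inv_closed[OF d(1)]] by (simp add: D.m_closed)
  moreover have "central_gen g = inv\<^bsub>CG\<^esub> c \<otimes>\<^bsub>CG\<^esub> gen g \<otimes>\<^bsub>CG\<^esub> c \<otimes>\<^bsub>CG\<^esub> inv\<^bsub>CG\<^esub> d"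
    using conj_gen_eq[OF c(1) g] c(2) k(2) by (simp add: central_gen_def d_def)
  ultimately have "central_gen g \<otimes>\<^bsub>CG\<^esub> inv\<^bsub>CG\<^esub> (gen g) \<in> D"
    using c(1) y d(2) by (simp add: CG.m_assoc)
  then have "central_gen g \<in> D #>\<^bsub>CG\<^esub> gen g"
    using D.rcos_module_rev[OF CG.is_group y central_gen_in_carrier[OF g]] by simp
  then show ?thesis
    using CG.repr_independence[OF _ y D.subgroup_axioms] by simp
qed

abbreviation \<sigma> :: "('a \<times> bool) list set \<Rightarrow> ('a \<times> bool) list set" where
  "\<sigma> \<equiv> C_lift CG central_gen"

lemma group_hom_\<sigma>: "group_hom CG CG \<sigma>"
  using C_lift_hom[OF conj_compatible_central_gen] group_C_group
  by (simp add: group_hom_def group_hom_axioms_def)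

lemma proj_\<sigma>: "x \<in> carrier CG \<Longrightarrow> proj (\<sigma> x) = \<one>"
proof -
  assume x: "x \<in> carrier CG"
  interpret CG: group CG by (rule group_C_group)
  interpret \<sigma>: group_hom CG CG \<sigma> by (rule group_hom_\<sigma>)
  interpret proj: group_hom CG G proj by (rule group_hom_proj)
  have "\<sigma> ` gen ` Oc \<subseteq> kernel CG G proj"
    using C_lift_gen[OF conj_compatible_central_gen] central_gen_in_carrier proj_central_gen
    by (auto simp: kernel_def)
  then have "generate CG (\<sigma> ` gen ` Oc) \<subseteq> kernel CG G proj"
    by (rule CG.generate_subgroup_incl[OF _ proj.subgroup_kernel])
  moreover have "generate CG (\<sigma> ` gen ` Oc) = \<sigma> ` carrier CG"
    using \<sigma>.generate_img[of "gen ` Oc"] gen_in_carrier generate_gen by blast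
  ultimately show ?thesis
    using x by (auto simp: kernel_def)
qed

lemma \<sigma>_central: "x \<in> carrier CG \<Longrightarrow> y \<in> carrier CG \<Longrightarrow> \<sigma> x \<otimes>\<^bsub>CG\<^esub> y = y \<otimes>\<^bsub>CG\<^esub> \<sigma> x"
  using kernel_proj_central proj_\<sigma> group_hom.hom_closed[OF group_hom_\<sigma>] by blast

lemma derived_subset_kernel_\<sigma>: "D \<subseteq> kernel CG CG \<sigma>"
  using group_hom.derived_subset_kernel[OF group_hom_\<sigma>] \<sigma>_central
    group_hom.hom_closed[OF group_hom_\<sigma>] by blast

lemma rcos_\<sigma>:
  assumes x: "x \<in> carrier CG"
  shows "D #>\<^bsub>CG\<^esub> \<sigma> x = D #>\<^bsub>CG\<^esub> x"
proof (rule normal.rcos_hom_eq_generate[OF derived_normal])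
  show "\<sigma> \<in> hom CG CG"
    by (rule C_lift_hom[OF conj_compatible_central_gen])
  show "gen ` Oc \<subseteq> carrier CG"
    using gen_in_carrier by blast
  show "x \<in> generate CG (gen ` Oc)"
    using x by (simp add: generate_gen)
  fix s assume "s \<in> gen ` Oc"
  then obtain g where "g \<in> Oc" "s = gen g"
    by blast
  then show "D #>\<^bsub>CG\<^esub> \<sigma> s = D #>\<^bsub>CG\<^esub> s"
    by (simp add: C_lift_gen[OF conj_compatible_central_gen] rcos_central_gen)
qed

lemma kernel_\<sigma>: "kernel CG CG \<sigma> = D"
proof
  interpret CG: group CG by (rule group_C_group)
  interpret D: normal D CG by (rule derived_normal)
  show "kernel CG CG \<sigma> \<subseteq> D"
  proof
    fix x assume "x \<in> kernel CG CG \<sigma>"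
    then have x: "x \<in> carrier CG" "\<sigma> x = \<one>\<^bsub>CG\<^esub>"
      by (simp_all add: kernel_def)
    then have "D #>\<^bsub>CG\<^esub> x = D"
      using rcos_\<sigma>[OF x(1)] CG.coset_join2[OF _ D.subgroup_axioms] by (simp add: D.subset)
    then show "x \<in> D"
      using CG.rcos_self[OF x(1) D.subgroup_axioms] by simp
  qed
qed (rule derived_subset_kernel_\<sigma>)

lemma \<sigma>_idempotent: "x \<in> carrier CG \<Longrightarrow> \<sigma> (\<sigma> x) = \<sigma> x"
proof -
  assume x: "x \<in> carrier CG"
  interpret CG: group CG by (rule group_C_group)
  interpret D: normal D CG by (rule derived_normal)
  interpret \<sigma>: group_hom CG CG \<sigma> by (rule group_hom_\<sigma>)
  have "\<sigma> x \<otimes>\<^bsub>CG\<^esub> inv\<^bsub>CG\<^esub> x \<in> D"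
    using rcos_\<sigma>[OF x] CG.rcos_self[OF _ D.subgroup_axioms, of "\<sigma> x"] x
      D.rcos_module_imp[OF CG.is_group x] by simp
  then have "\<sigma> x \<otimes>\<^bsub>CG\<^esub> inv\<^bsub>CG\<^esub> x \<in> kernel CG CG \<sigma>"
    by (simp only: kernel_\<sigma>)
  then have "\<sigma> (\<sigma> x \<otimes>\<^bsub>CG\<^esub> inv\<^bsub>CG\<^esub> x) = \<one>\<^bsub>CG\<^esub>"
    by (simp add: kernel_def)
  then have "\<sigma> (\<sigma> x) \<otimes>\<^bsub>CG\<^esub> inv\<^bsub>CG\<^esub> (\<sigma> x) = \<one>\<^bsub>CG\<^esub>"
    using x by simp
  then show ?thesis
    using x by (simp add: CG.inv_solve_right')
qed

theorem C_group_iso_derived_DirProd: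
  "CG \<cong> CG\<lparr>carrier := D\<rparr> \<times>\<times> (CG Mod D)"
  using group.central_idempotent_splitting[OF group_C_group _ \<sigma>_idempotent \<sigma>_central]
    C_lift_hom[OF conj_compatible_central_gen] kernel_\<sigma>
  by (auto intro: is_isoI)

end

lemma equipped_group_conj_closed:
  assumes "equipped_group G Oc" "g \<in> Oc" "h \<in> carrier G"
  shows "inv\<^bsub>G\<^esub> h \<otimes>\<^bsub>G\<^esub> g \<otimes>\<^bsub>G\<^esub> h \<in> Oc"
proof -
  obtain S where G: "group G" and S: "S \<subseteq> carrier G" "Oc = (\<Union>s\<in>S. conj_class G s)"
    using assms(1) unfolding equipped_group_def by blast
  then obtain s where "s \<in> S" "g \<in> conj_class G s"
    using assms(2) by blast
  with S assms(3) show ?thesis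
    using group.conj_class_conj_closed[OF G] by blast
qed

theorem proposition2p14:
  fixes G :: "('a, 'b) monoid_scheme" and Oc :: "'a set"
  assumes "equipped_group G Oc"
    and "generate G Oc = carrier G"
    and "perfect_group G"
  shows "C_group G Oc \<cong>
           ((C_group G Oc)\<lparr>carrier := derived (C_group G Oc) (carrier (C_group G Oc))\<rparr>
            \<times>\<times> (C_group G Oc Mod derived (C_group G Oc) (carrier (C_group G Oc))))"
proof -
  have "group G" "Oc \<subseteq> carrier G"
    using assms(1) by (simp_all add: equipped_group_def)
  then interpret perfect_conj_invariant_subset G Oc
    using assms(2,3) equipped_group_conj_closed[OF assms(1)]
    by (simp add: perfect_conj_invariant_subset_def conj_invariant_subset_def
        perfect_conj_invariant_subset_axioms_def conj_invariant_subset_axioms_def perfect_group_def)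
  show ?thesis
    by (rule C_group_iso_derived_DirProd)
qed

end
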